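(* There is no local distribution in the 4-output triangle network that is output-permutation invariant and saturates the Finner inequality. Precisely, let $\alpha,\beta,\gamma$ be independent and uniform on $[0,1]$, and let $s_A,s_B,s_C:[0,1]^2\to\{0,1,2,3\}$ be measurable. Let $p_{abc}$ be the joint distribution of $(s_A(\beta,\gamma),s_B(\alpha,\gamma),s_C(\alpha,\beta))$. Then $p$ cannot simultaneously satisfy both of the following: (i) $p$ is output-permutation invariant (OPI); (ii) $p_{000}=\sqrt{p(a=0)\,p(b=0)\,p(c=0)}$. Under (i) all one-party marginals equal $\tfrac14$, so condition (ii) is equivalent to $p_{xxx}=\tfrac18$ for all $x\in\{0,1,2,3\}$.
   Context: A distribution $p_{abc}$ on $\{0,1,2,3\}^3$ is called output-permutation invariant (OPI) if it satisfies two conditions. First, it is invariant under any permutation of the three parties, e.g. $p_{abc}=p_{bca}=p_{bac}$. Second, it is invariant under applying one common permutation $\sigma$ of $\{0,1,2,3\}$ to all outputs, i.e. $p_{abc}=p_{\sigma(a)\sigma(b)\sigma(c)}$. Equivalently, $p_{abc}$ depends only on the pattern of equalities among $a,b,c$. The value is $p_{111}$ if all three outputs are equal, $p_{112}$ if exactly two are equal, and $p_{123}$ if all three are distinct. These satisfy $4p_{111}+36p_{112}+24p_{123}=1$. The Finner inequality states $p_{abc}\le\sqrt{p(a)p(b)p(c)}$, where $p(a)$, $p(b)$, $p(c)$ are the one-party marginals. It holds for all local triangle distributions, i.e. those generated by the model above. *)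

theory Defs
  imports "HOL-Analysis.Analysis" "HOL-Combinatorics.Permutations"
begin

definition unit_cube :: "(real \<times> real \<times> real) set" where
  "unit_cube = {(\<alpha>, \<beta>, \<gamma>). \<alpha> \<in> {0..1} \<and> \<beta> \<in> {0..1} \<and> \<gamma> \<in> {0..1}}"

definition tri_p :: "(real \<times> real \<Rightarrow> nat) \<Rightarrow> (real \<times> real \<Rightarrow> nat) \<Rightarrow> (real \<times> real \<Rightarrow> nat)
    \<Rightarrow> nat \<Rightarrow> nat \<Rightarrow> nat \<Rightarrow> real" where
  "tri_p sA sB sC a b c = measure lborel
     {(\<alpha>, \<beta>, \<gamma>). (\<alpha>, \<beta>, \<gamma>) \<in> unit_cube \<and> sA (\<beta>, \<gamma>) = a \<and> sB (\<alpha>, \<gamma>) = b \<and> sC (\<alpha>, \<beta>) = c}"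

definition tri_pA :: "(real \<times> real \<Rightarrow> nat) \<Rightarrow> nat \<Rightarrow> real" where
  "tri_pA sA a = measure lborel {(\<alpha>, \<beta>, \<gamma>). (\<alpha>, \<beta>, \<gamma>) \<in> unit_cube \<and> sA (\<beta>, \<gamma>) = a}"

definition tri_pB :: "(real \<times> real \<Rightarrow> nat) \<Rightarrow> nat \<Rightarrow> real" where
  "tri_pB sB b = measure lborel {(\<alpha>, \<beta>, \<gamma>). (\<alpha>, \<beta>, \<gamma>) \<in> unit_cube \<and> sB (\<alpha>, \<gamma>) = b}"

definition tri_pC :: "(real \<times> real \<Rightarrow> nat) \<Rightarrow> nat \<Rightarrow> real" where
  "tri_pC sC c = measure lborel {(\<alpha>, \<beta>, \<gamma>). (\<alpha>, \<beta>, \<gamma>) \<in> unit_cube \<and> sC (\<alpha>, \<beta>) = c}"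

definition OPI :: "(nat \<Rightarrow> nat \<Rightarrow> nat \<Rightarrow> real) \<Rightarrow> bool" where
  "OPI p \<longleftrightarrow>
     (\<forall>a\<in>{0..3}. \<forall>b\<in>{0..3}. \<forall>c\<in>{0..3}.
        p a b c = p a c b \<and> p a b c = p b a c \<and> p a b c = p b c a \<and>
        p a b c = p c a b \<and> p a b c = p c b a) \<and>
     (\<forall>\<sigma>. \<sigma> permutes {0..3::nat} \<longrightarrow>
        (\<forall>a\<in>{0..3}. \<forall>b\<in>{0..3}. \<forall>c\<in>{0..3}. p a b c = p (\<sigma> a) (\<sigma> b) (\<sigma> c)))"

end

theory Submission
  imports Defs
begin

text \<open>
  Condition on the source \<open>\<alpha>\<close> shared by B and C. For an output \<open>k\<close>, let \<open>c(\<alpha>)\<close> and \<open>b(\<alpha>)\<close> be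
  the lengths of the slices \<open>C\<^sub>k(\<alpha>) = {\<beta>. s\<^sub>C(\<alpha>,\<beta>) = k}\<close> and \<open>B\<^sub>k(\<alpha>) = {\<gamma>. s\<^sub>B(\<alpha>,\<gamma>) = k}\<close>,
  and \<open>t(\<alpha>)\<close> the area of A's level set \<open>{s\<^sub>A = k}\<close> inside the rectangle \<open>C\<^sub>k(\<alpha>) \<times> B\<^sub>k(\<alpha>)\<close>, so that
  \<open>p\<^sub>k\<^sub>k\<^sub>k = \<integral> t\<close>. Under OPI all marginals are \<open>1/4\<close>, hence \<open>t \<le> min (1/4) (c b) \<le> (c + b)/4\<close>,
  and integrating gives \<open>p\<^sub>k\<^sub>k\<^sub>k \<le> 1/8\<close>. Saturation \<open>p\<^sub>k\<^sub>k\<^sub>k = 1/8\<close> forces equality for almost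
  every \<open>\<alpha>\<close>, so wherever \<open>c + b > 0\<close> we get \<open>c = b = 1/2\<close> and the rectangle coincides with
  \<open>{s\<^sub>A = k}\<close> up to a null set. Consequently the slices \<open>C\<^sub>k(\<alpha>)\<close> at all such \<open>\<alpha>\<close> agree up
  to null sets, and if \<open>\<alpha>\<close> works for two outputs \<open>x \<noteq> y\<close>, then \<open>C\<^sub>x(\<alpha>)\<close> and \<open>C\<^sub>y(\<alpha>)\<close> are
  complementary halves of \<open>[0,1]\<close>. For \<open>x \<noteq> y\<close>, OPI and saturation give positive probability
  to the event that B outputs \<open>x\<close> and C outputs \<open>y\<close>, which yields such an \<open>\<alpha>\<close> for each of the pairs
  \<open>(0,1)\<close>, \<open>(0,2)\<close>, \<open>(1,2)\<close>. By the first two, \<open>C\<^sub>2\<close> is the complement of \<open>C\<^sub>0\<close>, i.e. it equals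
  \<open>C\<^sub>1\<close>; but at the third point \<open>C\<^sub>1\<close> and \<open>C\<^sub>2\<close> are disjoint halves.
\<close>

section \<open>Lebesgue measure\<close>

lemma sets_lborel_Times:
  fixes X :: "'a::euclidean_space set" and Y :: "'b::euclidean_space set"
  assumes "X \<in> sets lborel" "Y \<in> sets lborel"
  shows "X \<times> Y \<in> sets lborel"
  using pair_measureI[OF assms] by (metis lborel_prod)

lemma measure_lborel_Times:
  fixes X :: "'a::euclidean_space set" and Y :: "'b::euclidean_space set"
  assumes "X \<in> sets lborel" "Y \<in> sets lborel"
  shows "measure lborel (X \<times> Y) = measure lborel X * measure lborel Y"
  using lborel.emeasure_pair_measure_Times[OF assms]
  by (simp add: lborel_prod measure_def enn2real_mult)

lemma sets_lborel_Pair_vimage: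
  fixes X :: "('a::euclidean_space \<times> 'b::euclidean_space) set"
  assumes "X \<in> sets lborel"
  shows "Pair x -` X \<in> sets lborel"
  using sets_Pair1[of X lborel lborel] assms by (metis lborel_prod sets_lborel)

lemma continuous_vimage_sets_lborel:
  fixes f :: "'a::euclidean_space \<Rightarrow> 'b::euclidean_space"
  assumes "continuous_on UNIV f" "X \<in> sets lborel"
  shows "f -` X \<in> sets lborel"
  using measurable_sets[OF borel_measurable_continuous_onI[OF assms(1)], of X] assms(2) by simp

lemma fmeasurable_lborel_bounded:
  fixes X :: "'a::euclidean_space set"
  assumes "X \<in> sets lborel" "bounded X"
  shows "X \<in> fmeasurable lborel"
  using assms(1) emeasure_bounded_finite[OF assms(2)] by (rule fmeasurableI)

lemma sets_unit_square: "{0..1::real} \<times> {0..1::real} \<in> sets lborel"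
  by (intro sets_lborel_Times) simp_all

lemma fmeasurable_unit_interval_subset:
  assumes "X \<in> sets lborel" "X \<subseteq> {0..1::real}"
  shows "X \<in> fmeasurable lborel"
  using assms(1) bounded_subset[OF bounded_closed_interval assms(2)]
  by (rule fmeasurable_lborel_bounded)

lemma fmeasurable_square_subset:
  assumes "X \<in> sets lborel" "X \<subseteq> {0..1::real} \<times> {0..1::real}"
  shows "X \<in> fmeasurable lborel"
  using assms(1) bounded_subset[OF bounded_Times[OF bounded_closed_interval bounded_closed_interval] assms(2)]
  by (rule fmeasurable_lborel_bounded)

lemma measure_lborel_eq_integral_slices:
  fixes S :: "('a::euclidean_space \<times> 'b::euclidean_space) set"
  assumes S: "S \<in> sets lborel" "bounded S"
  shows "integrable lborel (\<lambda>x. measure lborel (Pair x -` S))"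
    and "measure lborel S = (\<integral>x. measure lborel (Pair x -` S) \<partial>lborel)"
proof -
  obtain r where r: "\<And>p. p \<in> S \<Longrightarrow> norm p \<le> r"
    using S(2) by (auto simp: bounded_iff)
  have S': "S \<in> sets (lborel \<Otimes>\<^sub>M lborel)"
    using S(1) by (simp only: lborel_prod)
  have slice_sub: "Pair x -` S \<subseteq> cball 0 r" for x
    using r order_trans[OF norm_snd_le[of _ x]] by fastforce
  have slice_fmeasurable: "Pair x -` S \<in> fmeasurable lborel" for x
    using bounded_subset[OF bounded_cball slice_sub]
    by (intro fmeasurable_lborel_bounded sets_lborel_Pair_vimage S(1))
  have slice_empty: "Pair x -` S = {}" if "x \<notin> cball 0 r" for x
    using that r order_trans[OF norm_fst_le[of x]] by fastforce
  have meas: "(\<lambda>x. measure lborel (Pair x -` S)) \<in> borel_measurable lborel"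
    unfolding measure_def using lborel.measurable_emeasure_Pair[OF S'] by measurable
  have bound: "measure lborel (Pair x -` S)
      \<le> indicator (cball 0 r) x * measure lborel (cball (0::'b) r)" for x
  proof (cases "x \<in> cball 0 r")
    case True
    have "measure lborel (Pair x -` S) \<le> measure lborel (cball (0::'b) r)"
      by (intro measure_mono_fmeasurable[OF slice_sub] fmeasurable_lborel_bounded
          sets_lborel_Pair_vimage S(1)) auto
    thus ?thesis using True by simp
  qed (simp add: slice_empty)
  show int: "integrable lborel (\<lambda>x. measure lborel (Pair x -` S))"
  proof (rule Bochner_Integration.integrable_bound[OF _ meas])
    show "integrable lborel (\<lambda>x. indicator (cball 0 r) x * measure lborel (cball (0::'b) r))"
      using emeasure_bounded_finite[OF bounded_cball]
      by (intro integrable_mult_left) (simp add: integrable_indicator_iff)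
    show "AE x in lborel. norm (measure lborel (Pair x -` S))
        \<le> norm (indicator (cball 0 r) x * measure lborel (cball (0::'b) r))"
      using bound by (intro AE_I2) (simp add: abs_mult)
  qed
  have "emeasure lborel S = (\<integral>\<^sup>+x. emeasure lborel (Pair x -` S) \<partial>lborel)"
    using lborel.emeasure_pair_measure_alt[OF S'] by (simp add: lborel_prod)
  also have "\<dots> = (\<integral>\<^sup>+x. ennreal (measure lborel (Pair x -` S)) \<partial>lborel)"
    using slice_fmeasurable by (simp add: emeasure_eq_measure2)
  also have "\<dots> = ennreal (\<integral>x. measure lborel (Pair x -` S) \<partial>lborel)"
    by (rule nn_integral_eq_integral[OF int]) auto
  finally show "measure lborel S = (\<integral>x. measure lborel (Pair x -` S) \<partial>lborel)"
    by (simp add: measure_def integral_nonneg_AE)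
qed

lemma null_sets_measure_eq_0:
  assumes "A \<in> fmeasurable M" "measure M A = 0"
  shows "A \<in> null_sets M"
  using assms by (auto simp: emeasure_eq_measure2)

lemma Diff_null_sets_measure_Int_eq:
  assumes "A \<in> fmeasurable M" "B \<in> sets M" "measure M (A \<inter> B) = measure M A"
  shows "A - B \<in> null_sets M"
proof (rule null_sets_measure_eq_0)
  show "A - B \<in> fmeasurable M" using assms(1,2) by (rule fmeasurable_Diff)
  have "measure M (A - (A \<inter> B)) = measure M A - measure M (A \<inter> B)"
    using assms(1,2) by (intro measure_Diff) (auto dest: fmeasurableD2)
  moreover have "A - (A \<inter> B) = A - B" by blast
  ultimately show "measure M (A - B) = 0" using assms(3) by simp
qed

lemma level_set_sets_lborel:
  assumes "s \<in> measurable (restrict_space lborel \<Omega>) (count_space UNIV)" "\<Omega> \<in> sets lborel"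
  shows "{x \<in> \<Omega>. s x = k} \<in> sets lborel"
proof -
  have \<Omega>: "\<Omega> \<inter> space lborel \<in> sets lborel"
    using assms(2) by (simp only: space_lborel space_borel Int_UNIV_right)
  have "s -` {k} \<inter> space (restrict_space lborel \<Omega>) \<in> sets (restrict_space lborel \<Omega>)"
    by (rule measurable_sets[OF assms(1)]) simp
  hence "s -` {k} \<inter> space (restrict_space lborel \<Omega>) \<in> sets lborel"
    unfolding sets_restrict_space_iff[OF \<Omega>] by (rule conjunct2)
  moreover have "s -` {k} \<inter> space (restrict_space lborel \<Omega>) = {x \<in> \<Omega>. s x = k}"
    by (auto simp: space_restrict_space)
  ultimately show ?thesis by (simp only:)
qed

lemma min_quarter_product_square_le:
  fixes b c :: real
  assumes "0 \<le> b" "0 \<le> c"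
  shows "(min (1/4) (b * c))\<^sup>2 \<le> b * c / 4"
proof -
  have "min (1/4) (b * c) * min (1/4) (b * c) \<le> 1/4 * (b * c)"
    using assms by (intro mult_mono) auto
  thus ?thesis by (simp add: power2_eq_square)
qed

lemma min_quarter_product_le:
  fixes b c :: real
  assumes "0 \<le> b" "0 \<le> c"
  shows "min (1/4) (b * c) \<le> (b + c) / 4"
proof (rule power2_le_imp_le)
  have "4 * (b * c) \<le> (b + c)\<^sup>2"
    using sum_squares_ge_zero[of "b - c" 0] by (simp add: power2_eq_square algebra_simps)
  thus "(min (1/4) (b * c))\<^sup>2 \<le> ((b + c) / 4)\<^sup>2"
    using min_quarter_product_square_le[OF assms] by (simp add: power_divide)
qed (use assms in simp)

lemma min_quarter_product_eq:
  fixes b c :: real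
  assumes "0 \<le> b" "0 \<le> c" "0 < b + c" and eq: "min (1/4) (b * c) = (b + c) / 4"
  shows "b = 1/2" "c = 1/2"
proof -
  have "(b + c)\<^sup>2 \<le> 4 * (b * c)"
    using min_quarter_product_square_le[OF assms(1,2)] unfolding eq by (simp add: power_divide)
  hence "(b - c)\<^sup>2 \<le> 0" by (simp add: power2_eq_square algebra_simps)
  hence bc: "b = c" by simp
  have "(b + b) / 4 \<le> 1/4" "(b + b) / 4 \<le> b * b"
    using eq min.cobounded1[of "1/4" "b * b"] min.cobounded2[of "1/4" "b * b"]
    unfolding bc by linarith+
  moreover have "0 < b" using assms(3) bc by simp
  ultimately have "b \<le> 1/2" "1/2 \<le> b"
    by (simp_all add: mult_le_cancel_left_pos[of b "1/2" b, symmetric])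
  thus "b = 1/2" "c = 1/2" using bc by simp_all
qed

section \<open>Output-permutation invariant distributions\<close>

lemma OPI_transpose:
  assumes "OPI p" "a \<le> 3" "b \<le> 3" "c \<le> 3" "x \<le> 3" "y \<le> 3"
  shows "p a b c = p (Transposition.transpose x y a) (Transposition.transpose x y b) (Transposition.transpose x y c)"
proof -
  have "Transposition.transpose x y permutes {0..3::nat}"
    using assms(5,6) by (intro permutes_swap_id) auto
  thus ?thesis using assms(1-4) unfolding OPI_def by auto
qed

lemma OPI_diagonal:
  assumes "OPI p" "u \<le> 3"
  shows "p u u u = p 0 0 0"
  using OPI_transpose[OF assms(1) assms(2) assms(2) assms(2), of 0 u] assms(2) by simp

lemma OPI_two_equal:
  assumes "OPI p" "u \<le> 3" "v \<le> 3" "u \<noteq> v"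
  shows "p u u v = p 0 0 1"
proof -
  define v' where "v' = Transposition.transpose 0 u v"
  have "v' \<noteq> 0" "v' \<le> 3"
    using assms(2-4) by (auto simp: v'_def Transposition.transpose_def)
  have "p u u v = p 0 0 v'"
    using OPI_transpose[OF assms(1) assms(2) assms(2) assms(3), of 0 u] assms(2)
    by (simp add: v'_def)
  also have "\<dots> = p 0 0 1"
    using OPI_transpose[OF assms(1) _ _ \<open>v' \<le> 3\<close>, of 0 0 1 v'] \<open>v' \<noteq> 0\<close> \<open>v' \<le> 3\<close>
    by (simp add: Transposition.transpose_def)
  finally show ?thesis .
qed

lemma OPI_all_distinct:
  assumes "OPI p" "u \<le> 3" "v \<le> 3" "w \<le> 3" "u \<noteq> v" "v \<noteq> w" "u \<noteq> w"
  shows "p u v w = p 0 1 2"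
proof -
  define v' w' where "v' = Transposition.transpose 0 u v" and "w' = Transposition.transpose 0 u w"
  have v'w': "v' \<noteq> 0" "v' \<le> 3" "w' \<noteq> 0" "w' \<le> 3" "v' \<noteq> w'"
    using assms(2-7) by (auto simp: v'_def w'_def Transposition.transpose_def)
  define w'' where "w'' = Transposition.transpose 1 v' w'"
  have w'': "w'' \<noteq> 0" "w'' \<noteq> 1" "w'' \<le> 3"
    using v'w' by (auto simp: w''_def Transposition.transpose_def)
  have "p u v w = p 0 v' w'"
    using OPI_transpose[OF assms(1-4), of 0 u] assms(2) by (simp add: v'_def w'_def)
  also have "\<dots> = p 0 1 w''"
    using OPI_transpose[OF assms(1) _ v'w'(2,4), of 0 1 v'] v'w'
    by (simp add: w''_def Transposition.transpose_def)
  also have "\<dots> = p 0 1 2"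
    using OPI_transpose[OF assms(1) _ _ w''(3), of 0 1 2 w''] w'' by (simp add: Transposition.transpose_def)
  finally show ?thesis .
qed

lemma OPI_equality_pattern:
  assumes "OPI p" "a \<le> 3" "b \<le> 3" "c \<le> 3"
  shows "p a b c = (if a = b \<and> b = c then p 0 0 0
                   else if a = b \<or> b = c \<or> a = c then p 0 0 1 else p 0 1 2)"
proof -
  have parties: "p a b c = p a c b" "p a b c = p b c a"
    using assms unfolding OPI_def by auto
  consider "a = b" "b = c" | "a = b" "b \<noteq> c" | "b = c" "a \<noteq> b" | "a = c" "a \<noteq> b"
    | "a \<noteq> b" "b \<noteq> c" "a \<noteq> c" by blast
  thus ?thesis
  proof cases
    case 2 thus ?thesis using OPI_two_equal[OF assms(1,3,4)] by simp
  next
    case 3 thus ?thesis using OPI_two_equal[OF assms(1,3,2)] parties(2) by simp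
  next
    case 4 thus ?thesis using OPI_two_equal[OF assms(1,2,3)] parties(1) by simp
  qed (use OPI_diagonal[OF assms(1,2)] OPI_all_distinct[OF assms] in auto)
qed

lemma OPI_sum_by_pattern:
  assumes "OPI p" "K \<subseteq> {0..3} \<times> {0..3} \<times> {0..3}"
  shows "(\<Sum>(a, u, v)\<in>K. p a u v) = (\<Sum>(a, u, v)\<in>K. if a = u \<and> u = v then p 0 0 0
                   else if a = u \<or> u = v \<or> a = v then p 0 0 1 else p 0 1 2)"
proof (rule sum.cong[OF refl], clarify)
  fix a u v assume "(a, u, v) \<in> K"
  thus "p a u v = (if a = u \<and> u = v then p 0 0 0
                   else if a = u \<or> u = v \<or> a = v then p 0 0 1 else p 0 1 2)"
    using assms(2) by (intro OPI_equality_pattern[OF assms(1)]) auto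
qed

lemma OPI_total:
  assumes "OPI p"
  shows "(\<Sum>(a, u, v)\<in>{0..3} \<times> {0..3} \<times> {0..3}. p a u v)
    = 4 * p 0 0 0 + 36 * p 0 0 1 + 24 * p 0 1 2"
proof -
  have "{0..3::nat} = {0, 1, 2, 3}" by auto
  thus ?thesis
    by (subst OPI_sum_by_pattern[OF assms order_refl]) (simp add: sum.cartesian_product[symmetric])
qed

lemma OPI_marginals:
  assumes "OPI p" "k \<le> 3"
  shows "(\<Sum>(a, u, v)\<in>{k} \<times> {0..3} \<times> {0..3}. p a u v) = p 0 0 0 + 9 * p 0 0 1 + 6 * p 0 1 2"
    and "(\<Sum>(a, u, v)\<in>{0..3} \<times> {k} \<times> {0..3}. p a u v) = p 0 0 0 + 9 * p 0 0 1 + 6 * p 0 1 2"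
    and "(\<Sum>(a, u, v)\<in>{0..3} \<times> {0..3} \<times> {k}. p a u v) = p 0 0 0 + 9 * p 0 0 1 + 6 * p 0 1 2"
proof -
  have K: "{0..3::nat} = {0, 1, 2, 3}" and k: "k \<in> {0, 1, 2, 3}" using assms(2) by auto
  show "(\<Sum>(a, u, v)\<in>{k} \<times> {0..3} \<times> {0..3}. p a u v) = p 0 0 0 + 9 * p 0 0 1 + 6 * p 0 1 2"
    using k by (subst OPI_sum_by_pattern[OF assms(1)]) (auto simp: K sum.cartesian_product[symmetric])
  show "(\<Sum>(a, u, v)\<in>{0..3} \<times> {k} \<times> {0..3}. p a u v) = p 0 0 0 + 9 * p 0 0 1 + 6 * p 0 1 2"
    using k by (subst OPI_sum_by_pattern[OF assms(1)]) (auto simp: K sum.cartesian_product[symmetric])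
  show "(\<Sum>(a, u, v)\<in>{0..3} \<times> {0..3} \<times> {k}. p a u v) = p 0 0 0 + 9 * p 0 0 1 + 6 * p 0 1 2"
    using k by (subst OPI_sum_by_pattern[OF assms(1)]) (auto simp: K sum.cartesian_product[symmetric])
qed

lemma OPI_column:
  assumes "OPI p" "x \<le> 3" "y \<le> 3" "x \<noteq> y"
  shows "(\<Sum>(a, u, v)\<in>{0..3} \<times> {x} \<times> {y}. p a u v) = 2 * p 0 0 1 + 2 * p 0 1 2"
proof -
  have "{0..3::nat} = {0, 1, 2, 3}" "x \<in> {0, 1, 2, 3}" "y \<in> {0, 1, 2, 3}" using assms(2,3) by auto
  thus ?thesis
    using assms(4)
    by (subst OPI_sum_by_pattern[OF assms(1)]) (auto simp: sum.cartesian_product[symmetric])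
qed

section \<open>The triangle network\<close>

locale triangle_model =
  fixes sA sB sC :: "real \<times> real \<Rightarrow> nat"
  assumes measurable_sA: "sA \<in> measurable (restrict_space lborel ({0..1} \<times> {0..1})) (count_space UNIV)"
      and measurable_sB: "sB \<in> measurable (restrict_space lborel ({0..1} \<times> {0..1})) (count_space UNIV)"
      and measurable_sC: "sC \<in> measurable (restrict_space lborel ({0..1} \<times> {0..1})) (count_space UNIV)"
      and outputs: "\<forall>x \<in> {0..1} \<times> {0..1}. sA x \<in> {0..3} \<and> sB x \<in> {0..3} \<and> sC x \<in> {0..3}"
begin

definition levelA :: "nat \<Rightarrow> (real \<times> real) set" where
  "levelA k = {x \<in> {0..1} \<times> {0..1}. sA x = k}"
definition levelB :: "nat \<Rightarrow> (real \<times> real) set" where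
  "levelB k = {x \<in> {0..1} \<times> {0..1}. sB x = k}"
definition levelC :: "nat \<Rightarrow> (real \<times> real) set" where
  "levelC k = {x \<in> {0..1} \<times> {0..1}. sC x = k}"

lemma sets_levels:
  "levelA k \<in> sets lborel" "levelB k \<in> sets lborel" "levelC k \<in> sets lborel"
  unfolding levelA_def levelB_def levelC_def
  by (rule level_set_sets_lborel[OF measurable_sA sets_unit_square]
           level_set_sets_lborel[OF measurable_sB sets_unit_square]
           level_set_sets_lborel[OF measurable_sC sets_unit_square])+

definition event :: "(nat \<Rightarrow> nat \<Rightarrow> nat \<Rightarrow> bool) \<Rightarrow> (real \<times> real \<times> real) set" where
  "event P = {(\<alpha>, \<beta>, \<gamma>). (\<alpha>, \<beta>, \<gamma>) \<in> unit_cube \<and> P (sA (\<beta>, \<gamma>)) (sB (\<alpha>, \<gamma>)) (sC (\<alpha>, \<beta>))}"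

definition cell :: "nat \<Rightarrow> nat \<Rightarrow> nat \<Rightarrow> (real \<times> real \<times> real) set" where
  "cell a b c = event (\<lambda>a' b' c'. a' = a \<and> b' = b \<and> c' = c)"

lemma cell_eq_vimages:
  "cell a b c = snd -` levelA a \<inter> (\<lambda>x. (fst x, snd (snd x))) -` levelB b
                 \<inter> (\<lambda>x. (fst x, fst (snd x))) -` levelC c"
  by (auto simp: cell_def event_def unit_cube_def levelA_def levelB_def levelC_def)

lemma sets_cell: "cell a b c \<in> sets lborel"
  unfolding cell_eq_vimages
  by (intro sets.Int continuous_vimage_sets_lborel continuous_intros sets_levels)

lemma unit_cube_eq: "unit_cube = {0..1} \<times> {0..1} \<times> {0..1}"
  by (auto simp: unit_cube_def)

lemma event_subset_unit_cube: "event P \<subseteq> unit_cube"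
  by (auto simp: event_def)

lemma event_eq_UN_cells:
  "event P = (\<Union>(a, b, c)\<in>{(a, b, c) \<in> {0..3} \<times> {0..3} \<times> {0..3}. P a b c}. cell a b c)"
  using outputs by (auto simp: event_def cell_def unit_cube_def)

lemma finite_outputs: "finite {(a, b, c) \<in> {0..3::nat} \<times> {0..3::nat} \<times> {0..3::nat}. P a b c}"
  by (rule finite_subset[of _ "{0..3} \<times> {0..3} \<times> {0..3}"]) auto

lemma sets_event: "event P \<in> sets lborel"
  unfolding event_eq_UN_cells using finite_outputs sets_cell by (intro sets.finite_UN) auto

lemma bounded_unit_cube: "bounded unit_cube"
  unfolding unit_cube_eq by (intro bounded_Times) auto

lemma bounded_event: "bounded (event P)"
  by (rule bounded_subset[OF bounded_unit_cube event_subset_unit_cube])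

lemma fmeasurable_event: "event P \<in> fmeasurable lborel"
  by (intro fmeasurable_lborel_bounded sets_event bounded_event)

lemma tri_p_eq_measure_cell: "tri_p sA sB sC a b c = measure lborel (cell a b c)"
  by (simp add: tri_p_def cell_def event_def)

lemma measure_event:
  "measure lborel (event P)
     = (\<Sum>(a, b, c)\<in>{(a, b, c) \<in> {0..3} \<times> {0..3} \<times> {0..3}. P a b c}. tri_p sA sB sC a b c)"
proof -
  have disjoint: "disjoint_family_on (\<lambda>(a, b, c). cell a b c) K" for K
    by (auto simp: disjoint_family_on_def cell_def event_def)
  have finite: "emeasure lborel (cell a b c) \<noteq> top" for a b c
    using fmeasurableD2[OF fmeasurable_event] unfolding cell_def .
  have "measure lborel (\<Union>i\<in>{(a, b, c) \<in> {0..3} \<times> {0..3} \<times> {0..3}. P a b c}. (\<lambda>(a, b, c). cell a b c) i)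
      = (\<Sum>i\<in>{(a, b, c) \<in> {0..3} \<times> {0..3} \<times> {0..3}. P a b c}. measure lborel ((\<lambda>(a, b, c). cell a b c) i))"
  proof (rule measure_finite_Union[OF finite_outputs _ disjoint])
    show "(\<lambda>(a, b, c). cell a b c) ` {(a, b, c) \<in> {0..3} \<times> {0..3} \<times> {0..3}. P a b c} \<subseteq> sets lborel"
      using sets_cell by (auto simp: image_subset_iff)
    show "emeasure lborel ((\<lambda>(a, b, c). cell a b c) i) \<noteq> \<infinity>" for i
      using finite[of "fst i" "fst (snd i)" "snd (snd i)"] by (simp add: split_beta)
  qed
  also have "\<dots> = (\<Sum>(a, b, c)\<in>{(a, b, c) \<in> {0..3} \<times> {0..3} \<times> {0..3}. P a b c}. tri_p sA sB sC a b c)"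
    by (rule sum.cong) (auto simp: tri_p_eq_measure_cell split: prod.splits)
  finally show ?thesis unfolding event_eq_UN_cells .
qed

lemma measure_unit_cube: "measure lborel unit_cube = 1"
proof -
  have "measure lborel ({0..1::real} \<times> {0..1::real}) = 1"
    by (subst measure_lborel_Times) simp_all
  thus ?thesis
    unfolding unit_cube_eq using sets_unit_square by (subst measure_lborel_Times) simp_all
qed

lemma sum_tri_p: "(\<Sum>(a, b, c)\<in>{0..3} \<times> {0..3} \<times> {0..3}. tri_p sA sB sC a b c) = 1"
proof -
  have "event (\<lambda>_ _ _. True) = unit_cube" by (auto simp: event_def)
  moreover have "{(a, b, c) \<in> {0..3} \<times> {0..3} \<times> {0..3}. True} = {0..3::nat} \<times> {0..3::nat} \<times> {0..3::nat}"
    by auto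
  ultimately show ?thesis using measure_event[of "\<lambda>_ _ _. True"] measure_unit_cube by (simp only:)
qed

lemma tri_pA_eq_sum:
  assumes "k \<le> 3"
  shows "tri_pA sA k = (\<Sum>(a, b, c)\<in>{k} \<times> {0..3} \<times> {0..3}. tri_p sA sB sC a b c)"
proof -
  have "{(a, b, c) \<in> {0..3} \<times> {0..3} \<times> {0..3}. a = k} = {k} \<times> {0..3::nat} \<times> {0..3::nat}"
    using assms by auto
  thus ?thesis using measure_event[of "\<lambda>a _ _. a = k"] by (simp add: tri_pA_def event_def)
qed

lemma tri_pB_eq_sum:
  assumes "k \<le> 3"
  shows "tri_pB sB k = (\<Sum>(a, b, c)\<in>{0..3} \<times> {k} \<times> {0..3}. tri_p sA sB sC a b c)"
proof -
  have "{(a, b, c) \<in> {0..3} \<times> {0..3} \<times> {0..3}. b = k} = {0..3::nat} \<times> {k} \<times> {0..3::nat}"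
    using assms by auto
  thus ?thesis using measure_event[of "\<lambda>_ b _. b = k"] by (simp add: tri_pB_def event_def)
qed

lemma tri_pC_eq_sum:
  assumes "k \<le> 3"
  shows "tri_pC sC k = (\<Sum>(a, b, c)\<in>{0..3} \<times> {0..3} \<times> {k}. tri_p sA sB sC a b c)"
proof -
  have "{(a, b, c) \<in> {0..3} \<times> {0..3} \<times> {0..3}. c = k} = {0..3::nat} \<times> {0..3::nat} \<times> {k}"
    using assms by auto
  thus ?thesis using measure_event[of "\<lambda>_ _ c. c = k"] by (simp add: tri_pC_def event_def)
qed

lemma tri_pA_eq_measure_levelA: "tri_pA sA k = measure lborel (levelA k)"
proof -
  have "{(\<alpha>, \<beta>, \<gamma>). (\<alpha>, \<beta>, \<gamma>) \<in> unit_cube \<and> sA (\<beta>, \<gamma>) = k} = {0..1} \<times> levelA k"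
    by (auto simp: unit_cube_def levelA_def)
  thus ?thesis by (simp add: tri_pA_def measure_lborel_Times[OF _ sets_levels(1)])
qed

definition sliceB :: "nat \<Rightarrow> real \<Rightarrow> real set" where
  "sliceB k \<alpha> = Pair \<alpha> -` levelB k"
definition sliceC :: "nat \<Rightarrow> real \<Rightarrow> real set" where
  "sliceC k \<alpha> = Pair \<alpha> -` levelC k"

definition massB :: "nat \<Rightarrow> real \<Rightarrow> real" where
  "massB k \<alpha> = measure lborel (sliceB k \<alpha>)"
definition massC :: "nat \<Rightarrow> real \<Rightarrow> real" where
  "massC k \<alpha> = measure lborel (sliceC k \<alpha>)"
definition massA :: "nat \<Rightarrow> real \<Rightarrow> real" where
  "massA k \<alpha> = measure lborel (levelA k \<inter> (sliceC k \<alpha> \<times> sliceB k \<alpha>))"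

lemma sets_slices: "sliceB k \<alpha> \<in> sets lborel" "sliceC k \<alpha> \<in> sets lborel"
  unfolding sliceB_def sliceC_def by (intro sets_lborel_Pair_vimage sets_levels)+

lemma slices_subset: "sliceB k \<alpha> \<subseteq> {0..1}" "sliceC k \<alpha> \<subseteq> {0..1}"
  by (auto simp: sliceB_def sliceC_def levelB_def levelC_def)

lemma event_integral:
  assumes "\<And>\<alpha>. measure lborel (Pair \<alpha> -` event P) = f \<alpha>"
  shows "measure lborel (event P) = (\<integral>\<alpha>. f \<alpha> \<partial>lborel)" "integrable lborel f"
proof -
  have "f = (\<lambda>\<alpha>. measure lborel (Pair \<alpha> -` event P))" using assms by auto
  thus "measure lborel (event P) = (\<integral>\<alpha>. f \<alpha> \<partial>lborel)" "integrable lborel f"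
    using measure_lborel_eq_integral_slices[OF sets_event bounded_event] by simp_all
qed

lemma tri_p_diagonal_integral:
  "tri_p sA sB sC k k k = (\<integral>\<alpha>. massA k \<alpha> \<partial>lborel)" "integrable lborel (massA k)"
proof -
  have "Pair \<alpha> -` cell k k k = levelA k \<inter> (sliceC k \<alpha> \<times> sliceB k \<alpha>)" for \<alpha>
    by (auto simp: cell_def event_def unit_cube_def levelA_def levelB_def levelC_def
                   sliceB_def sliceC_def)
  thus "tri_p sA sB sC k k k = (\<integral>\<alpha>. massA k \<alpha> \<partial>lborel)" "integrable lborel (massA k)"
    using event_integral[of "\<lambda>a b c. a = k \<and> b = k \<and> c = k" "massA k"]
    by (simp_all add: tri_p_eq_measure_cell cell_def massA_def)
qed

lemma tri_pB_integral: "tri_pB sB k = (\<integral>\<alpha>. massB k \<alpha> \<partial>lborel)" "integrable lborel (massB k)"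
proof -
  have "Pair \<alpha> -` event (\<lambda>_ b _. b = k) = {0..1} \<times> sliceB k \<alpha>" for \<alpha>
    by (auto simp: event_def unit_cube_def levelB_def sliceB_def)
  hence "measure lborel (Pair \<alpha> -` event (\<lambda>_ b _. b = k)) = massB k \<alpha>" for \<alpha>
    by (simp add: measure_lborel_Times[OF _ sets_slices(1)] massB_def)
  moreover have "tri_pB sB k = measure lborel (event (\<lambda>_ b _. b = k))"
    by (simp add: tri_pB_def event_def)
  ultimately show "tri_pB sB k = (\<integral>\<alpha>. massB k \<alpha> \<partial>lborel)" "integrable lborel (massB k)"
    using event_integral[of "\<lambda>_ b _. b = k" "massB k"] by simp_all
qed

lemma tri_pC_integral: "tri_pC sC k = (\<integral>\<alpha>. massC k \<alpha> \<partial>lborel)" "integrable lborel (massC k)"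
proof -
  have "Pair \<alpha> -` event (\<lambda>_ _ c. c = k) = sliceC k \<alpha> \<times> {0..1}" for \<alpha>
    by (auto simp: event_def unit_cube_def levelC_def sliceC_def)
  hence "measure lborel (Pair \<alpha> -` event (\<lambda>_ _ c. c = k)) = massC k \<alpha>" for \<alpha>
    by (simp add: measure_lborel_Times[OF sets_slices(2)] massC_def)
  moreover have "tri_pC sC k = measure lborel (event (\<lambda>_ _ c. c = k))"
    by (simp add: tri_pC_def event_def)
  ultimately show "tri_pC sC k = (\<integral>\<alpha>. massC k \<alpha> \<partial>lborel)" "integrable lborel (massC k)"
    using event_integral[of "\<lambda>_ _ c. c = k" "massC k"] by simp_all
qed

lemma column_integral:
  "measure lborel (event (\<lambda>_ b c. b = x \<and> c = y)) = (\<integral>\<alpha>. massC y \<alpha> * massB x \<alpha> \<partial>lborel)"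
proof (rule event_integral)
  fix \<alpha>
  have "Pair \<alpha> -` event (\<lambda>_ b c. b = x \<and> c = y) = sliceC y \<alpha> \<times> sliceB x \<alpha>"
    by (auto simp: event_def unit_cube_def levelB_def levelC_def sliceB_def sliceC_def)
  thus "measure lborel (Pair \<alpha> -` event (\<lambda>_ b c. b = x \<and> c = y)) = massC y \<alpha> * massB x \<alpha>"
    by (simp add: measure_lborel_Times[OF sets_slices(2,1)] massB_def massC_def)
qed

lemma fmeasurable_slices: "sliceB k \<alpha> \<in> fmeasurable lborel" "sliceC k \<alpha> \<in> fmeasurable lborel"
  by (intro fmeasurable_unit_interval_subset sets_slices slices_subset)+

lemma fmeasurable_rectangle: "sliceC k \<alpha> \<times> sliceB k' \<alpha>' \<in> fmeasurable lborel"
  using slices_subset by (intro fmeasurable_square_subset sets_lborel_Times sets_slices Sigma_mono)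

lemma fmeasurable_levelA: "levelA k \<in> fmeasurable lborel"
  by (intro fmeasurable_square_subset sets_levels) (auto simp: levelA_def)

lemma massA_le: "massA k \<alpha> \<le> massC k \<alpha> * massB k \<alpha>" "massA k \<alpha> \<le> measure lborel (levelA k)"
proof -
  note rectangle = fmeasurable_rectangle[of k \<alpha> k \<alpha>] and level = fmeasurable_levelA[of k]
  have inter: "levelA k \<inter> (sliceC k \<alpha> \<times> sliceB k \<alpha>) \<in> sets lborel"
    using level rectangle by (intro sets.Int fmeasurableD)
  have "massA k \<alpha> \<le> measure lborel (sliceC k \<alpha> \<times> sliceB k \<alpha>)"
    unfolding massA_def by (rule measure_mono_fmeasurable[OF Int_lower2 inter rectangle])
  thus "massA k \<alpha> \<le> massC k \<alpha> * massB k \<alpha>"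
    by (simp add: massB_def massC_def measure_lborel_Times[OF sets_slices(2,1)])
  show "massA k \<alpha> \<le> measure lborel (levelA k)"
    unfolding massA_def by (rule measure_mono_fmeasurable[OF Int_lower1 inter level])
qed

lemma mass_nonneg: "0 \<le> massB k \<alpha>" "0 \<le> massC k \<alpha>"
  by (simp_all add: massB_def massC_def)

lemma massA_le_min:
  assumes "measure lborel (levelA k) = 1/4"
  shows "massA k \<alpha> \<le> min (1/4) (massC k \<alpha> * massB k \<alpha>)"
  using massA_le[of k \<alpha>] assms by simp

lemma AE_massA_eq:
  assumes "tri_p sA sB sC k k k = 1/8" "tri_pB sB k = 1/4" "tri_pC sC k = 1/4"
    and "measure lborel (levelA k) = 1/4"
  shows "AE \<alpha> in lborel. massA k \<alpha> = (massC k \<alpha> + massB k \<alpha>) / 4"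
proof -
  let ?g = "\<lambda>\<alpha>. (massC k \<alpha> + massB k \<alpha>) / 4 - massA k \<alpha>"
  have "0 \<le> ?g \<alpha>" for \<alpha>
    using massA_le_min[OF assms(4)] min_quarter_product_le[OF mass_nonneg(2,1)]
    by (smt (verit))
  moreover have "integrable lborel ?g"
    using tri_pB_integral(2) tri_pC_integral(2) tri_p_diagonal_integral(2) by simp
  moreover have "integral\<^sup>L lborel ?g = 0"
    using tri_pB_integral tri_pC_integral tri_p_diagonal_integral assms(1-3) by simp
  ultimately have "AE \<alpha> in lborel. ?g \<alpha> = 0"
    using integral_nonneg_eq_0_iff_AE by blast
  thus ?thesis by eventually_elim simp
qed

definition saturated :: "nat \<Rightarrow> real \<Rightarrow> bool" where
  "saturated k \<alpha> \<longleftrightarrow> massC k \<alpha> = 1/2 \<and> massB k \<alpha> = 1/2 \<and> massA k \<alpha> = 1/4"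

lemma saturatedI:
  assumes "measure lborel (levelA k) = 1/4" "massA k \<alpha> = (massC k \<alpha> + massB k \<alpha>) / 4"
    and "0 < massC k \<alpha> + massB k \<alpha>"
  shows "saturated k \<alpha>"
proof -
  have "min (1/4) (massC k \<alpha> * massB k \<alpha>) = (massC k \<alpha> + massB k \<alpha>) / 4"
    using massA_le_min[OF assms(1), of \<alpha>] assms(2)
      min_quarter_product_le[OF mass_nonneg(2)[of k \<alpha>] mass_nonneg(1)[of k \<alpha>]]
    by linarith
  thus ?thesis
    using min_quarter_product_eq[OF mass_nonneg(2) mass_nonneg(1) assms(3)] assms(2)
    by (simp add: saturated_def)
qed

lemma saturated_common_point:
  assumes "AE \<alpha> in lborel. massA x \<alpha> = (massC x \<alpha> + massB x \<alpha>) / 4"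
    and "AE \<alpha> in lborel. massA y \<alpha> = (massC y \<alpha> + massB y \<alpha>) / 4"
    and "measure lborel (levelA x) = 1/4" "measure lborel (levelA y) = 1/4"
    and "0 < measure lborel (event (\<lambda>_ b c. b = x \<and> c = y))"
  obtains \<alpha> where "saturated x \<alpha>" "saturated y \<alpha>"
proof -
  have alternative: "AE \<alpha> in lborel. massC y \<alpha> * massB x \<alpha> = 0 \<or> (saturated x \<alpha> \<and> saturated y \<alpha>)"
    using assms(1,2)
  proof eventually_elim
    case (elim \<alpha>)
    have "0 < massB x \<alpha> \<Longrightarrow> saturated x \<alpha>" "0 < massC y \<alpha> \<Longrightarrow> saturated y \<alpha>"
      using saturatedI[OF assms(3) elim(1)] saturatedI[OF assms(4) elim(2)] mass_nonneg
      by (smt (verit))+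
    thus ?case using mass_nonneg[of x \<alpha>] mass_nonneg[of y \<alpha>] by (auto simp: less_le)
  qed
  have not_null: "\<not> (AE \<alpha> in lborel. massC y \<alpha> * massB x \<alpha> = 0)"
    using integral_eq_zero_AE[of "\<lambda>\<alpha>. massC y \<alpha> * massB x \<alpha>" lborel] assms(5)
    by (auto simp: column_integral)
  have "AE \<alpha> in lborel. massC y \<alpha> * massB x \<alpha> = 0"
    if "\<And>\<alpha>. \<not> (saturated x \<alpha> \<and> saturated y \<alpha>)"
    using alternative by eventually_elim (use that in blast)
  thus ?thesis using not_null that by blast
qed

text \<open>At a saturated point the rectangle coincides with \<open>levelA x\<close> up to a null set, so two such
  rectangles agree up to a null set, and so do their \<open>\<beta>\<close>-sides since \<open>massB x \<alpha> > 0\<close>.\<close>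

lemma saturated_sliceC_Diff_null:
  assumes "saturated x \<alpha>" "saturated x \<alpha>'" "measure lborel (levelA x) = 1/4"
  shows "sliceC x \<alpha> - sliceC x \<alpha>' \<in> null_sets lborel"
proof -
  define R R' where "R = sliceC x \<alpha> \<times> sliceB x \<alpha>" and "R' = sliceC x \<alpha>' \<times> sliceB x \<alpha>'"
  have "measure lborel R = massC x \<alpha> * massB x \<alpha>"
    unfolding R_def massB_def massC_def by (rule measure_lborel_Times[OF sets_slices(2,1)])
  also have "\<dots> = 1/4"
    using assms(1) unfolding saturated_def
    by (elim conjE) (rule trans[OF arg_cong2[where f = "(*)"]], assumption+, simp)
  finally have "measure lborel (R \<inter> levelA x) = measure lborel R"
    using assms(1) by (simp add: R_def saturated_def massA_def Int_commute)
  hence "R - levelA x \<in> null_sets lborel"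
    unfolding R_def by (intro Diff_null_sets_measure_Int_eq fmeasurable_rectangle sets_levels)
  moreover have "measure lborel (levelA x \<inter> R') = measure lborel (levelA x)"
    using assms(2,3) by (simp add: R'_def saturated_def massA_def)
  hence "levelA x - R' \<in> null_sets lborel"
    unfolding R'_def
    by (intro Diff_null_sets_measure_Int_eq fmeasurable_levelA fmeasurableD[OF fmeasurable_rectangle])
  moreover have "(sliceC x \<alpha> - sliceC x \<alpha>') \<times> sliceB x \<alpha> \<in> sets lborel"
    by (intro sets_lborel_Times sets.Diff sets_slices)
  ultimately have "(sliceC x \<alpha> - sliceC x \<alpha>') \<times> sliceB x \<alpha> \<in> null_sets lborel"
    by (rule null_sets_subset[OF null_sets.Un]) (auto simp: R_def R'_def)
  hence "measure lborel (sliceC x \<alpha> - sliceC x \<alpha>') * massB x \<alpha> = 0"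
    unfolding massB_def using sets_slices
    by (simp add: measure_eq_0_null_sets flip: measure_lborel_Times)
  hence "measure lborel (sliceC x \<alpha> - sliceC x \<alpha>') = 0"
    using assms(1) by (simp add: saturated_def)
  moreover have "sliceC x \<alpha> - sliceC x \<alpha>' \<in> fmeasurable lborel"
    using sets_slices by (intro fmeasurable_Diff fmeasurable_unit_interval_subset slices_subset)
  ultimately show ?thesis by (intro null_sets_measure_eq_0)
qed

lemma saturated_sliceC_cover:
  assumes "saturated x \<alpha>" "saturated y \<alpha>" "x \<noteq> y"
  shows "{0..1} - (sliceC x \<alpha> \<union> sliceC y \<alpha>) \<in> null_sets lborel"
proof (rule Diff_null_sets_measure_Int_eq)
  have "sliceC x \<alpha> \<inter> sliceC y \<alpha> = {}"
    using assms(3) by (auto simp: sliceC_def levelC_def)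
  hence "measure lborel (sliceC x \<alpha> \<union> sliceC y \<alpha>) = 1"
    using assms(1,2) fmeasurable_slices
    by (simp add: measure_Un3 saturated_def massC_def)
  moreover have "{0..1} \<inter> (sliceC x \<alpha> \<union> sliceC y \<alpha>) = sliceC x \<alpha> \<union> sliceC y \<alpha>"
    using slices_subset by blast
  ultimately show "measure lborel ({0..1} \<inter> (sliceC x \<alpha> \<union> sliceC y \<alpha>)) = measure lborel {0..1::real}"
    by simp
qed (use sets_slices fmeasurable_unit_interval_subset[of "{0..1}"] in auto)

text \<open>Up to null sets, a point of \<open>sliceC 0 \<alpha>\<^sub>1\<close> lies in \<open>sliceC 0 \<alpha>\<^sub>2\<close>, hence outside
  \<open>sliceC 2 \<alpha>\<^sub>2 \<supseteq> sliceC 2 \<alpha>\<^sub>3\<close>; it also lies outside \<open>sliceC 1 \<alpha>\<^sub>1 \<supseteq> sliceC 1 \<alpha>\<^sub>3\<close>, which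
  contradicts the cover at \<open>\<alpha>\<^sub>3\<close>. So \<open>sliceC 0 \<alpha>\<^sub>1\<close> would be null.\<close>

lemma no_pairwise_saturated_triple:
  assumes "\<And>k. k \<le> 2 \<Longrightarrow> measure lborel (levelA k) = 1/4"
    and "saturated 0 \<alpha>\<^sub>1" "saturated 1 \<alpha>\<^sub>1" "saturated 0 \<alpha>\<^sub>2" "saturated 2 \<alpha>\<^sub>2"
    and "saturated 1 \<alpha>\<^sub>3" "saturated 2 \<alpha>\<^sub>3"
  shows False
proof -
  have "(sliceC 0 \<alpha>\<^sub>1 - sliceC 0 \<alpha>\<^sub>2) \<union> (sliceC 1 \<alpha>\<^sub>3 - sliceC 1 \<alpha>\<^sub>1)
      \<union> (sliceC 2 \<alpha>\<^sub>3 - sliceC 2 \<alpha>\<^sub>2) \<union> ({0..1} - (sliceC 1 \<alpha>\<^sub>3 \<union> sliceC 2 \<alpha>\<^sub>3))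
      \<in> null_sets lborel"
    using assms by (intro null_sets.Un saturated_sliceC_Diff_null saturated_sliceC_cover) auto
  moreover have "sliceC 0 \<alpha>\<^sub>1 \<subseteq> (sliceC 0 \<alpha>\<^sub>1 - sliceC 0 \<alpha>\<^sub>2) \<union> (sliceC 1 \<alpha>\<^sub>3 - sliceC 1 \<alpha>\<^sub>1)
      \<union> (sliceC 2 \<alpha>\<^sub>3 - sliceC 2 \<alpha>\<^sub>2) \<union> ({0..1} - (sliceC 1 \<alpha>\<^sub>3 \<union> sliceC 2 \<alpha>\<^sub>3))"
    by (auto simp: sliceC_def levelC_def)
  ultimately have "sliceC 0 \<alpha>\<^sub>1 \<in> null_sets lborel"
    using sets_slices by (blast intro: null_sets_subset)
  hence "massC 0 \<alpha>\<^sub>1 = 0" by (simp add: massC_def measure_eq_0_null_sets)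
  thus False using assms(2) by (simp add: saturated_def)
qed

lemma OPI_marginals_quarter:
  assumes "OPI (tri_p sA sB sC)" "k \<le> 3"
  shows "tri_pA sA k = 1/4" "tri_pB sB k = 1/4" "tri_pC sC k = 1/4"
  using OPI_marginals[OF assms] OPI_total[OF assms(1)] sum_tri_p
  by (simp_all add: tri_pA_eq_sum tri_pB_eq_sum tri_pC_eq_sum assms(2))

lemma OPI_Finner_diagonal:
  assumes "OPI (tri_p sA sB sC)"
    and "tri_p sA sB sC 0 0 0 = sqrt (tri_pA sA 0 * tri_pB sB 0 * tri_pC sC 0)"
    and "k \<le> 3"
  shows "tri_p sA sB sC k k k = 1/8"
proof -
  have "sqrt (1/4 * (1/4) * (1/4)) = (1/8 :: real)"
    by (rule real_sqrt_unique) (simp_all add: power2_eq_square)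
  thus ?thesis
    using assms(2) OPI_marginals_quarter[OF assms(1), of 0] OPI_diagonal[OF assms(1,3)] by simp
qed

lemma OPI_Finner_column_positive:
  assumes "OPI (tri_p sA sB sC)"
    and "tri_p sA sB sC 0 0 0 = sqrt (tri_pA sA 0 * tri_pB sB 0 * tri_pC sC 0)"
    and "x \<le> 3" "y \<le> 3" "x \<noteq> y"
  shows "0 < measure lborel (event (\<lambda>_ b c. b = x \<and> c = y))"
proof -
  have "{(a, b, c) \<in> {0..3} \<times> {0..3} \<times> {0..3}. b = x \<and> c = y} = {0..3::nat} \<times> {x} \<times> {y}"
    using assms(3,4) by auto
  hence "measure lborel (event (\<lambda>_ b c. b = x \<and> c = y))
      = 2 * tri_p sA sB sC 0 0 1 + 2 * tri_p sA sB sC 0 1 2"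
    using measure_event[of "\<lambda>_ b c. b = x \<and> c = y"] OPI_column[OF assms(1,3-5)] by simp
  moreover have "36 * tri_p sA sB sC 0 0 1 + 24 * tri_p sA sB sC 0 1 2 = 1/2"
    using OPI_total[OF assms(1)] sum_tri_p OPI_Finner_diagonal[OF assms(1,2), of 0] by simp
  moreover have "0 \<le> tri_p sA sB sC 0 0 1" "0 \<le> tri_p sA sB sC 0 1 2"
    by (simp_all add: tri_p_eq_measure_cell)
  ultimately show ?thesis by linarith
qed

theorem not_OPI_Finner_saturating:
  "\<not> (OPI (tri_p sA sB sC) \<and> tri_p sA sB sC 0 0 0 = sqrt (tri_pA sA 0 * tri_pB sB 0 * tri_pC sC 0))"
proof
  assume "OPI (tri_p sA sB sC) \<and> tri_p sA sB sC 0 0 0 = sqrt (tri_pA sA 0 * tri_pB sB 0 * tri_pC sC 0)"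
  hence opi: "OPI (tri_p sA sB sC)"
    and saturating: "tri_p sA sB sC 0 0 0 = sqrt (tri_pA sA 0 * tri_pB sB 0 * tri_pC sC 0)" by auto
  have levelA: "measure lborel (levelA k) = 1/4" if "k \<le> 2" for k
    using OPI_marginals_quarter[OF opi, of k] that by (simp add: tri_pA_eq_measure_levelA)
  have AE: "AE \<alpha> in lborel. massA k \<alpha> = (massC k \<alpha> + massB k \<alpha>) / 4" if "k \<le> 2" for k
    using that OPI_Finner_diagonal[OF opi saturating, of k] OPI_marginals_quarter[OF opi, of k]
    by (intro AE_massA_eq levelA) simp_all
  have common: "\<exists>\<alpha>. saturated x \<alpha> \<and> saturated y \<alpha>" if xy: "x < y" "y \<le> 2" for x y
  proof -
    have positive: "0 < measure lborel (event (\<lambda>_ b c. b = x \<and> c = y))"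
      using xy by (intro OPI_Finner_column_positive[OF opi saturating]) simp_all
    have "x \<le> 2" using xy by simp
    obtain \<alpha> where "saturated x \<alpha>" "saturated y \<alpha>"
      by (rule saturated_common_point[OF AE[OF \<open>x \<le> 2\<close>] AE[OF xy(2)]
            levelA[OF \<open>x \<le> 2\<close>] levelA[OF xy(2)] positive])
    thus ?thesis by blast
  qed
  obtain \<alpha>\<^sub>1 \<alpha>\<^sub>2 \<alpha>\<^sub>3 where "saturated 0 \<alpha>\<^sub>1" "saturated 1 \<alpha>\<^sub>1" "saturated 0 \<alpha>\<^sub>2" "saturated 2 \<alpha>\<^sub>2"
    "saturated 1 \<alpha>\<^sub>3" "saturated 2 \<alpha>\<^sub>3"
    using common[of 0 1] common[of 0 2] common[of 1 2] by auto
  thus False using no_pairwise_saturated_triple[OF levelA] by blast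
qed

end

theorem theorem1:
  fixes sA sB sC :: "real \<times> real \<Rightarrow> nat"
  assumes "sA \<in> measurable (restrict_space lborel ({0..1} \<times> {0..1})) (count_space UNIV)"
      and "sB \<in> measurable (restrict_space lborel ({0..1} \<times> {0..1})) (count_space UNIV)"
      and "sC \<in> measurable (restrict_space lborel ({0..1} \<times> {0..1})) (count_space UNIV)"
      and "\<forall>x \<in> {0..1} \<times> {0..1}. sA x \<in> {0..3} \<and> sB x \<in> {0..3} \<and> sC x \<in> {0..3}"
  shows "\<not> (OPI (tri_p sA sB sC) \<and>
            tri_p sA sB sC 0 0 0 = sqrt (tri_pA sA 0 * tri_pB sB 0 * tri_pC sC 0))"
  using assms by (intro triangle_model.not_OPI_Finner_saturating triangle_model.intro)

end
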